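(* For every graph $G$, $\rho_{\widehat{T}}(G)=\Theta(G)$.
   Context: Graphs are finite and simple. A graph $G=(V,E)$ is a threshold graph if there exist real weights $w:V\to\mathbb{R}$ and a real number $s$ such that for all distinct $i,j\in V$: $w(i)+w(j)\ge s$ if and only if $ij\in E$. The threshold dimension $\Theta(G)$ of $G=(V,E)$ is the least $k\ge 1$ such that there exist threshold graphs $(V,E_1),\dots,(V,E_k)$ with each $E_i\subseteq E$ and $E_1\cup\dots\cup E_k=E$. For $u,v\in(\mathbb{R}\cup\{-\infty\})^k$ the max-plus tropical dot product is $u\,\widehat{\odot}\,v=\max_i(u_i+v_i)$. A max-plus $k$-tropical dot product representation of $G$ is a map $f:V\to(\mathbb{R}\cup\{-\infty\})^k$ with a threshold $t>0$ such that for all distinct $x,y\in V$: $xy\in E$ iff $f(x)\,\widehat{\odot}\,f(y)\ge t$. $\rho_{\widehat T}(G)$ is the least $k\ge 1$ for which such a representation exists. *)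

theory Defs
  imports "HOL-Analysis.Analysis"
begin

definition simple_graph :: "'a set \<Rightarrow> 'a set set \<Rightarrow> bool" where
  "simple_graph V E \<longleftrightarrow> finite V \<and> (\<forall>e\<in>E. e \<subseteq> V \<and> card e = 2)"

definition threshold_graph :: "'a set \<Rightarrow> 'a set set \<Rightarrow> bool" where
  "threshold_graph V F \<longleftrightarrow>
     (\<exists>(w::'a \<Rightarrow> real) (s::real). \<forall>i\<in>V. \<forall>j\<in>V. i \<noteq> j \<longrightarrow>
        (w i + w j \<ge> s \<longleftrightarrow> {i, j} \<in> F))"

definition threshold_dim :: "'a set \<Rightarrow> 'a set set \<Rightarrow> nat" where
  "threshold_dim V E = (LEAST k. k \<ge> 1 \<and>
     (\<exists>Es :: nat \<Rightarrow> 'a set set.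
        (\<forall>i<k. Es i \<subseteq> E \<and> threshold_graph V (Es i)) \<and> (\<Union>i<k. Es i) = E))"

text \<open>Max-plus tropical dot product of vectors in (R \<union> {-\<infinity>})^k, vectors modelled as
  nat \<Rightarrow> ereal with coordinates 0..k-1 (never +\<infinity>).\<close>
definition trop_dot :: "nat \<Rightarrow> (nat \<Rightarrow> ereal) \<Rightarrow> (nat \<Rightarrow> ereal) \<Rightarrow> ereal" where
  "trop_dot k u v = Max ((\<lambda>i. u i + v i) ` {..<k})"

definition maxplus_trop_rep :: "'a set \<Rightarrow> 'a set set \<Rightarrow> nat \<Rightarrow> bool" where
  "maxplus_trop_rep V E k \<longleftrightarrow>
     (\<exists>(f :: 'a \<Rightarrow> nat \<Rightarrow> ereal) (t::real).
        t > 0 \<and> (\<forall>x\<in>V. \<forall>i<k. f x i \<noteq> \<infinity>) \<and>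
        (\<forall>x\<in>V. \<forall>y\<in>V. x \<noteq> y \<longrightarrow> ({x, y} \<in> E \<longleftrightarrow> trop_dot k (f x) (f y) \<ge> ereal t)))"

definition rho_trop :: "'a set \<Rightarrow> 'a set set \<Rightarrow> nat" where
  "rho_trop V E = (LEAST k. k \<ge> 1 \<and> maxplus_trop_rep V E k)"

end

theory Submission
  imports Defs
begin

text \<open>A max-plus representation with threshold t gives, coordinate by coordinate, the graphs
  "f x i + f y i \<ge> t"; each is a threshold graph (a weight -\<infinity> can be replaced by a very
  negative real), they lie in E, and their union is E because the max-plus product reaches t
  exactly when some coordinate does. Conversely, k threshold graphs with weights w_i and
  thresholds s_i covering E give the representation x \<mapsto> (w_i x - s_i/2 + 1/2)_i with
  threshold 1. So both invariants are the least k admitting the same kind of cover.\<close>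

definition threshold_cover :: "'a set \<Rightarrow> 'a set set \<Rightarrow> nat \<Rightarrow> (nat \<Rightarrow> 'a set set) \<Rightarrow> bool" where
  "threshold_cover V E k Es \<longleftrightarrow>
     (\<forall>i<k. Es i \<subseteq> E \<and> threshold_graph V (Es i)) \<and> (\<Union>i<k. Es i) = E"

lemma threshold_dim_eq_Least_cover:
  "threshold_dim V E = (LEAST k. k \<ge> 1 \<and> (\<exists>Es. threshold_cover V E k Es))"
  unfolding threshold_dim_def threshold_cover_def ..

lemma trop_dot_ge_iff:
  assumes "k \<ge> 1"
  shows "c \<le> trop_dot k u v \<longleftrightarrow> (\<exists>i<k. c \<le> u i + v i)"
proof -
  have "{..<k} \<noteq> {}" using assms by (auto simp: lessThan_empty_iff)
  then show ?thesis unfolding trop_dot_def by (subst Max_ge_iff) auto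
qed

lemma threshold_graph_ereal_weights:
  fixes g :: "'a \<Rightarrow> ereal"
  assumes "finite V" and not_inf: "\<forall>x\<in>V. g x \<noteq> \<infinity>"
    and thr: "\<forall>x\<in>V. \<forall>y\<in>V. x \<noteq> y \<longrightarrow> (ereal s \<le> g x + g y \<longleftrightarrow> {x, y} \<in> F)"
  shows "threshold_graph V F"
proof -
  define C where "C = (\<Sum>x\<in>V. \<bar>real_of_ereal (g x)\<bar>)"
  have C_bound: "\<bar>real_of_ereal (g x)\<bar> \<le> C" if "x \<in> V" for x
    unfolding C_def using assms(1) that
    by (intro member_le_sum) (auto simp del: abs_real_of_ereal)
  have "C \<ge> 0"
    unfolding C_def by (intro sum_nonneg) (auto simp del: abs_real_of_ereal)
  define M where "M = - C - \<bar>s\<bar> - 1"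
  define w where "w x = (if g x = - \<infinity> then M else real_of_ereal (g x))" for x
  have w_le: "w x \<le> C" if "x \<in> V" for x
    using C_bound[OF that] \<open>C \<ge> 0\<close> unfolding w_def M_def
    by (auto simp del: abs_real_of_ereal)
  have pair_iff: "s \<le> w x + w y \<longleftrightarrow> ereal s \<le> g x + g y" if "x \<in> V" "y \<in> V" for x y
  proof (cases "g x = - \<infinity> \<or> g y = - \<infinity>")
    case True
    \<comment> \<open>M + C < s, so a vertex of weight -\<infinity> stays below the threshold with every partner.\<close>
    then have "w x + w y < s"
      using w_le[OF that(1)] w_le[OF that(2)] unfolding w_def M_def by (auto split: if_splits)
    moreover have "g x + g y = - \<infinity>" using True not_inf that by auto
    ultimately show ?thesis by (metis MInfty_neq_ereal(1) ereal_infty_less_eq(2) not_le)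
  next
    case False
    moreover have "g x \<noteq> \<infinity>" "g y \<noteq> \<infinity>" using not_inf that by auto
    ultimately obtain a b where "g x = ereal a" "g y = ereal b" by (meson ereal_cases)
    then show ?thesis by (simp add: w_def)
  qed
  show ?thesis unfolding threshold_graph_def
  proof (intro exI[of _ w] exI[of _ s] ballI impI)
    fix x y assume "x \<in> V" "y \<in> V" "x \<noteq> y"
    then show "s \<le> w x + w y \<longleftrightarrow> {x, y} \<in> F" using thr pair_iff by blast
  qed
qed

definition coord_edges :: "'a set \<Rightarrow> ('a \<Rightarrow> nat \<Rightarrow> ereal) \<Rightarrow> real \<Rightarrow> nat \<Rightarrow> 'a set set" where
  "coord_edges V f t i = {{x, y} | x y. x \<in> V \<and> y \<in> V \<and> x \<noteq> y \<and> ereal t \<le> f x i + f y i}"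

lemma coord_edges_iff:
  assumes "a \<in> V" "b \<in> V" "a \<noteq> b"
  shows "{a, b} \<in> coord_edges V f t i \<longleftrightarrow> ereal t \<le> f a i + f b i"
  using assms unfolding coord_edges_def by (auto simp: doubleton_eq_iff add.commute)

lemma threshold_cover_if_maxplus_trop_rep:
  assumes G: "simple_graph V E" and k: "k \<ge> 1" and "maxplus_trop_rep V E k"
  shows "\<exists>Es. threshold_cover V E k Es"
proof -
  obtain f t where not_inf: "\<forall>x\<in>V. \<forall>i<k. f x i \<noteq> \<infinity>"
    and rep: "\<forall>x\<in>V. \<forall>y\<in>V. x \<noteq> y \<longrightarrow> ({x, y} \<in> E \<longleftrightarrow> ereal t \<le> trop_dot k (f x) (f y))"
    using assms(3) unfolding maxplus_trop_rep_def by (elim exE conjE) (rule that)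
  have "finite V" using G unfolding simple_graph_def by simp
  have sub: "coord_edges V f t i \<subseteq> E" if "i < k" for i
  proof
    fix e assume "e \<in> coord_edges V f t i"
    then obtain x y where "e = {x, y}" "x \<in> V" "y \<in> V" "x \<noteq> y" "ereal t \<le> f x i + f y i"
      unfolding coord_edges_def by blast
    then show "e \<in> E" using rep that trop_dot_ge_iff[OF k] by blast
  qed
  have thr: "threshold_graph V (coord_edges V f t i)" if "i < k" for i
  proof (rule threshold_graph_ereal_weights[where g = "\<lambda>x. f x i" and s = t])
    show "\<forall>x\<in>V. f x i \<noteq> \<infinity>" using not_inf that by blast
    show "\<forall>x\<in>V. \<forall>y\<in>V. x \<noteq> y \<longrightarrow> (ereal t \<le> f x i + f y i \<longleftrightarrow> {x, y} \<in> coord_edges V f t i)"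
      by (simp add: coord_edges_iff)
  qed fact
  have "E \<subseteq> (\<Union>i<k. coord_edges V f t i)"
  proof
    fix e assume "e \<in> E"
    then obtain x y where e: "e = {x, y}" "x \<noteq> y" "x \<in> V" "y \<in> V"
      using G unfolding simple_graph_def by (metis card_2_iff insert_subset)
    then have "ereal t \<le> trop_dot k (f x) (f y)" using rep \<open>e \<in> E\<close> by blast
    then obtain i where "i < k" "ereal t \<le> f x i + f y i" using trop_dot_ge_iff[OF k] by blast
    then have "{x, y} \<in> coord_edges V f t i" using e(2-4) by (simp add: coord_edges_iff)
    then show "e \<in> (\<Union>i<k. coord_edges V f t i)" using \<open>i < k\<close> e(1) by blast
  qed
  then have "threshold_cover V E k (coord_edges V f t)"
    unfolding threshold_cover_def using sub thr by blast
  then show ?thesis by blast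
qed

lemma maxplus_trop_rep_if_threshold_cover:
  assumes k: "k \<ge> 1" and "threshold_cover V E k Es"
  shows "maxplus_trop_rep V E k"
proof -
  have cover: "\<forall>i<k. Es i \<subseteq> E \<and> threshold_graph V (Es i)" "(\<Union>i<k. Es i) = E"
    using assms(2) unfolding threshold_cover_def by auto
  have "\<forall>i\<in>{..<k}. \<exists>w s. \<forall>a\<in>V. \<forall>b\<in>V. a \<noteq> b \<longrightarrow>
      ((s::real) \<le> w a + w b \<longleftrightarrow> {a, b} \<in> Es i)"
    using cover(1) unfolding threshold_graph_def by blast
  then obtain W where "\<forall>i\<in>{..<k}. \<exists>s. \<forall>a\<in>V. \<forall>b\<in>V. a \<noteq> b \<longrightarrow>
      ((s::real) \<le> W i a + W i b \<longleftrightarrow> {a, b} \<in> Es i)"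
    by (rule bchoice[THEN exE]) blast
  then obtain S where WS: "\<forall>i\<in>{..<k}. \<forall>a\<in>V. \<forall>b\<in>V. a \<noteq> b \<longrightarrow>
      (S i \<le> W i a + W i b \<longleftrightarrow> {a, b} \<in> Es i)"
    by (rule bchoice[THEN exE]) blast
  define f where "f x i = ereal (W i x - S i / 2 + 1/2)" for x i
  have "{x, y} \<in> E \<longleftrightarrow> ereal 1 \<le> trop_dot k (f x) (f y)"
    if "x \<in> V" "y \<in> V" "x \<noteq> y" for x y
  proof -
    have "ereal 1 \<le> f x i + f y i \<longleftrightarrow> S i \<le> W i x + W i y" for i
      by (simp add: f_def algebra_simps)
    then have "ereal 1 \<le> trop_dot k (f x) (f y) \<longleftrightarrow> (\<exists>i<k. S i \<le> W i x + W i y)"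
      by (simp add: trop_dot_ge_iff[OF k])
    also have "\<dots> \<longleftrightarrow> (\<exists>i<k. {x, y} \<in> Es i)" using WS that by auto
    also have "\<dots> \<longleftrightarrow> {x, y} \<in> E" using cover(2) by auto
    finally show ?thesis by simp
  qed
  then show ?thesis
    unfolding maxplus_trop_rep_def by (intro exI[of _ f] exI[of _ 1]) (auto simp: f_def)
qed

theorem mainTheorem6:
  fixes V :: "'a set" and E :: "'a set set"
  assumes "simple_graph V E"
  shows "rho_trop V E = threshold_dim V E"
proof -
  have "k \<ge> 1 \<and> maxplus_trop_rep V E k \<longleftrightarrow> k \<ge> 1 \<and> (\<exists>Es. threshold_cover V E k Es)" for k
    using threshold_cover_if_maxplus_trop_rep[OF assms] maxplus_trop_rep_if_threshold_cover
    by blast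
  then show ?thesis unfolding rho_trop_def threshold_dim_eq_Least_cover by simp
qed

end
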